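(* Let $K$ be a convex body in $\mathbb{R}^d$ with $o\in\mathrm{int}(K)$, let $\varepsilon\ge0$, and let $v_1+\lambda_1K$, $v_2+\lambda_2K$ be positive homothets of $K$ with $\lambda_1,\lambda_2\ge1$, $v_1\notin v_2+\lambda_2\,\mathrm{int}(K)$, $v_2\notin v_1+\lambda_1\,\mathrm{int}(K)$, and for $i=1,2$: $o\notin v_i+\lambda_i\,\mathrm{int}(K)$ and $(v_i+\lambda_iK)\cap(-\varepsilon K)\ne\emptyset$. Then \[\left\|\frac{-v_1}{\|-v_1\|_K}-\frac{-v_2}{\|-v_2\|_K}\right\|_{K\cap-K}\ge1-\varepsilon.\]
   Context: A convex body is a compact convex set with non-empty interior. For a convex body $L$ with $o\in\mathrm{int}(L)$, $\|x\|_L=\inf\{\mu>0:x\in\mu L\}$; in particular $\|x\|_{K\cap -K}=\max\{\|x\|_K,\|-x\|_K\}$. *)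

theory Defs
  imports "HOL-Analysis.Analysis"
begin

definition convex_body :: "'a::euclidean_space set \<Rightarrow> bool" where
  "convex_body K \<longleftrightarrow> compact K \<and> convex K \<and> interior K \<noteq> {}"

definition gauge_norm :: "'a::euclidean_space set \<Rightarrow> 'a \<Rightarrow> real" where
  "gauge_norm L x = Inf {\<mu>. \<mu> > 0 \<and> x \<in> (\<lambda>y. \<mu> *\<^sub>R y) ` L}"

definition homothet :: "'a::real_vector \<Rightarrow> real \<Rightarrow> 'a set \<Rightarrow> 'a set" where
  "homothet v c S = (\<lambda>x. v + c *\<^sub>R x) ` S"

end

theory Submission
  imports Defs
begin

text \<open>Write \<open>-v\<^sub>i = n\<^sub>i u\<^sub>i\<close> with \<open>n\<^sub>i = \<parallel>-v\<^sub>i\<parallel>\<^sub>K\<close> and \<open>u\<^sub>i \<in> K\<close>. The hypotheses on the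
  homothets pin \<open>n\<^sub>i\<close> between \<open>\<lambda>\<^sub>i\<close> and \<open>\<lambda>\<^sub>i + \<epsilon>\<close>. If \<open>u\<^sub>1 - u\<^sub>2 \<in> \<mu> (K \<inter> -K)\<close> with
  \<open>\<mu> < 1 - \<epsilon>\<close> and, say, \<open>n\<^sub>1 \<le> n\<^sub>2\<close>, then by convexity
  \<open>v\<^sub>1 - v\<^sub>2 = (n\<^sub>2 - n\<^sub>1) u\<^sub>2 + n\<^sub>1 (u\<^sub>2 - u\<^sub>1) \<in> (n\<^sub>2 - n\<^sub>1 + n\<^sub>1 \<mu>) K\<close>, and
  \<open>n\<^sub>2 - n\<^sub>1 (1 - \<mu>) \<le> \<lambda>\<^sub>2 + \<epsilon> - (1 - \<mu>) < \<lambda>\<^sub>2\<close>, so \<open>v\<^sub>1 \<in> v\<^sub>2 + \<lambda>\<^sub>2 int K\<close>.\<close>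

lemma scaleR_add_mem_scaled_convex:
  fixes K :: "'a::real_vector set"
  assumes "convex K" "x \<in> K" "y \<in> K" "0 \<le> a" "0 \<le> b"
  shows "a *\<^sub>R x + b *\<^sub>R y \<in> (\<lambda>k. (a + b) *\<^sub>R k) ` K"
proof (cases "a + b = 0")
  case True
  then have "a = 0" "b = 0" using assms by auto
  then show ?thesis using assms(2) by (intro image_eqI[of _ _ x]) auto
next
  case False
  then have ab: "0 < a + b" using assms by linarith
  have "(a / (a + b)) *\<^sub>R x + (b / (a + b)) *\<^sub>R y \<in> K"
    using assms ab by (intro convexD) (auto simp: add_divide_distrib[symmetric])
  moreover have "a *\<^sub>R x + b *\<^sub>R y = (a + b) *\<^sub>R ((a / (a + b)) *\<^sub>R x + (b / (a + b)) *\<^sub>R y)"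
    using ab by (simp add: scaleR_add_right)
  ultimately show ?thesis by blast
qed

lemma scaleR_mem_interior_convex:
  fixes K :: "'a::euclidean_space set"
  assumes "convex K" "0 \<in> interior K" "x \<in> K" "0 \<le> t" "t < 1"
  shows "t *\<^sub>R x \<in> interior K"
proof -
  have "x - (1 - t) *\<^sub>R (x - 0) \<in> interior K"
    using assms by (intro mem_interior_convex_shrink) auto
  then show ?thesis by (simp add: algebra_simps)
qed

lemma homothet_interior_mem:
  fixes K :: "'a::euclidean_space set"
  assumes "convex K" "0 \<in> interior K" "k \<in> K" "0 \<le> c" "c < l"
  shows "v + c *\<^sub>R k \<in> homothet v l (interior K)"
proof -
  have "(c / l) *\<^sub>R k \<in> interior K"
    using assms by (intro scaleR_mem_interior_convex) auto
  moreover have "v + c *\<^sub>R k = v + l *\<^sub>R ((c / l) *\<^sub>R k)" using assms by simp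
  ultimately show ?thesis unfolding homothet_def by blast
qed

lemma gauge_norm_le:
  fixes L :: "'a::euclidean_space set"
  assumes "0 < c" "k \<in> L"
  shows "gauge_norm L (c *\<^sub>R k) \<le> c"
  unfolding gauge_norm_def using assms by (intro cInf_lower bdd_belowI[of _ 0]) auto

lemma gauge_norm_lessE:
  fixes L :: "'a::euclidean_space set"
  assumes "0 \<in> interior L" "gauge_norm L x < z"
  obtains \<mu> k where "0 < \<mu>" "\<mu> < z" "k \<in> L" "x = \<mu> *\<^sub>R k"
proof -
  obtain e where e: "0 < e" "cball 0 e \<subseteq> L" using assms(1) mem_interior_cball by blast
  define \<mu> where "\<mu> = (norm x + 1) / e"
  have "0 < \<mu>" using e by (simp add: \<mu>_def add_nonneg_pos)
  moreover have "norm ((1 / \<mu>) *\<^sub>R x) \<le> e"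
    using e by (simp add: \<mu>_def pos_divide_le_eq add_pos_nonneg algebra_simps)
  then have "(1 / \<mu>) *\<^sub>R x \<in> L" using e(2) by auto
  moreover have "x = \<mu> *\<^sub>R ((1 / \<mu>) *\<^sub>R x)" using \<open>0 < \<mu>\<close> by simp
  ultimately have "\<mu> \<in> {\<mu>. 0 < \<mu> \<and> x \<in> (\<lambda>y. \<mu> *\<^sub>R y) ` L}"
    using \<open>0 < \<mu>\<close> by blast
  then have "\<exists>\<mu>'\<in>{\<mu>. 0 < \<mu> \<and> x \<in> (\<lambda>y. \<mu> *\<^sub>R y) ` L}. \<mu>' < z"
    using assms(2) unfolding gauge_norm_def by (intro cInf_lessD) auto
  then show ?thesis using that by blast
qed

lemma inverse_gauge_norm_scaleR_mem:
  fixes L :: "'a::euclidean_space set"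
  assumes "closed L" "convex L" "0 \<in> interior L" "0 < gauge_norm L x"
  shows "(1 / gauge_norm L x) *\<^sub>R x \<in> L"
proof -
  define g where "g = gauge_norm L x"
  have near: "inverse \<mu> *\<^sub>R x \<in> L" if "g < \<mu>" for \<mu>
  proof -
    obtain m k where "0 < m" "m < \<mu>" "k \<in> L" "x = m *\<^sub>R k"
      using \<open>g < \<mu>\<close> unfolding g_def by (rule gauge_norm_lessE[OF assms(3)])
    then have "(m / \<mu>) *\<^sub>R k \<in> interior L"
      using assms by (intro scaleR_mem_interior_convex) auto
    moreover have "inverse \<mu> *\<^sub>R x = (m / \<mu>) *\<^sub>R k"
      using \<open>x = m *\<^sub>R k\<close> by (simp add: divide_inverse_commute)
    ultimately show ?thesis using interior_subset by auto
  qed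
  have "\<forall>\<^sub>F \<mu> in at_right g. inverse \<mu> *\<^sub>R x \<in> L"
    using eventually_at_right_less[of g] by (rule eventually_mono) (rule near)
  moreover have "((\<lambda>\<mu>. inverse \<mu> *\<^sub>R x) \<longlongrightarrow> inverse g *\<^sub>R x) (at_right g)"
    using assms(4) unfolding g_def by (intro tendsto_intros) auto
  ultimately have "inverse g *\<^sub>R x \<in> L"
    by (intro Lim_in_closed_set[OF assms(1)]) auto
  then show ?thesis by (simp add: g_def divide_inverse)
qed

lemma le_gauge_norm_if_origin_notin_homothet:
  fixes K :: "'a::euclidean_space set"
  assumes "convex K" "0 \<in> interior K" "0 \<notin> homothet v l (interior K)"
  shows "l \<le> gauge_norm K (- v)"
proof (rule ccontr)
  assume "\<not> ?thesis"
  then have "gauge_norm K (- v) < l" by simp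
  then obtain m k where "0 < m" "m < l" "k \<in> K" "- v = m *\<^sub>R k"
    by (rule gauge_norm_lessE[OF assms(2)])
  then have "v + m *\<^sub>R k \<in> homothet v l (interior K)"
    using assms by (intro homothet_interior_mem) auto
  moreover have "v + m *\<^sub>R k = 0"
    using \<open>- v = m *\<^sub>R k\<close> by (simp add: neg_eq_iff_add_eq_0)
  ultimately show False using assms(3) by simp
qed

lemma gauge_norm_le_if_homothet_meets:
  fixes K :: "'a::euclidean_space set"
  assumes "convex K" "0 < l" "0 \<le> \<epsilon>"
    and "homothet v l K \<inter> (\<lambda>x. (- \<epsilon>) *\<^sub>R x) ` K \<noteq> {}"
  shows "gauge_norm K (- v) \<le> l + \<epsilon>"
proof -
  obtain k k' where "k \<in> K" "k' \<in> K" "v + l *\<^sub>R k = (- \<epsilon>) *\<^sub>R k'"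
    using assms(4) unfolding homothet_def by auto
  moreover from this obtain w where "w \<in> K" "l *\<^sub>R k + \<epsilon> *\<^sub>R k' = (l + \<epsilon>) *\<^sub>R w"
    using scaleR_add_mem_scaled_convex[OF assms(1), of k k' l \<epsilon>] assms(2,3) by auto
  ultimately have "- v = (l + \<epsilon>) *\<^sub>R w" "w \<in> K"
    by (simp_all add: neg_eq_iff_add_eq_0 eq_neg_iff_add_eq_0 add.assoc)
  then show ?thesis using assms by (simp add: gauge_norm_le)
qed

lemma homothet_interior_mem_if_close_directions_le:
  fixes K :: "'a::euclidean_space set"
  assumes "convex K" "0 \<in> interior K" "u\<^sub>2 \<in> K" "z \<in> K" "0 \<le> \<epsilon>"
    and "1 \<le> n\<^sub>1" "n\<^sub>1 \<le> n\<^sub>2" "n\<^sub>2 \<le> l + \<epsilon>" "0 \<le> \<mu>" "\<mu> < 1 - \<epsilon>"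
    and "u\<^sub>2 - u\<^sub>1 = \<mu> *\<^sub>R z"
  shows "- (n\<^sub>1 *\<^sub>R u\<^sub>1) \<in> homothet (- (n\<^sub>2 *\<^sub>R u\<^sub>2)) l (interior K)"
proof -
  define c where "c = (n\<^sub>2 - n\<^sub>1) + n\<^sub>1 * \<mu>"
  have "0 \<le> n\<^sub>2 - n\<^sub>1" "0 \<le> n\<^sub>1 * \<mu>" using assms(6,7,9) by auto
  then obtain k where k: "k \<in> K" "(n\<^sub>2 - n\<^sub>1) *\<^sub>R u\<^sub>2 + (n\<^sub>1 * \<mu>) *\<^sub>R z = c *\<^sub>R k"
    using scaleR_add_mem_scaled_convex[OF assms(1,3,4)] unfolding c_def by blast
  have "n\<^sub>2 *\<^sub>R u\<^sub>2 - n\<^sub>1 *\<^sub>R u\<^sub>1 = (n\<^sub>2 - n\<^sub>1) *\<^sub>R u\<^sub>2 + n\<^sub>1 *\<^sub>R (u\<^sub>2 - u\<^sub>1)"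
    by (simp add: algebra_simps)
  also have "\<dots> = c *\<^sub>R k" using k(2) assms(11) by simp
  finally have "- (n\<^sub>1 *\<^sub>R u\<^sub>1) = - (n\<^sub>2 *\<^sub>R u\<^sub>2) + c *\<^sub>R k"
    by (simp add: algebra_simps)
  moreover have "1 - \<mu> \<le> n\<^sub>1 * (1 - \<mu>)"
    using assms(5,6,10) by (simp add: mult_right_mono[of 1 n\<^sub>1 "1 - \<mu>", simplified])
  then have "c < l" using assms(8,10) by (simp add: c_def algebra_simps)
  moreover have "0 \<le> c" using assms(6,7,9) by (simp add: c_def)
  ultimately show ?thesis
    using homothet_interior_mem[OF assms(1,2) k(1), of c l "- (n\<^sub>2 *\<^sub>R u\<^sub>2)"] by simp
qed

lemma homothet_interior_mem_if_close_directions: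
  fixes K :: "'a::euclidean_space set"
  assumes "convex K" "0 \<in> interior K" "u\<^sub>1 \<in> K" "u\<^sub>2 \<in> K" "0 \<le> \<epsilon>"
    and "1 \<le> n\<^sub>1" "1 \<le> n\<^sub>2" "n\<^sub>1 \<le> l\<^sub>1 + \<epsilon>" "n\<^sub>2 \<le> l\<^sub>2 + \<epsilon>" "0 \<le> \<mu>" "\<mu> < 1 - \<epsilon>"
    and "y \<in> K" "- y \<in> K" "u\<^sub>1 - u\<^sub>2 = \<mu> *\<^sub>R y"
  shows "- (n\<^sub>1 *\<^sub>R u\<^sub>1) \<in> homothet (- (n\<^sub>2 *\<^sub>R u\<^sub>2)) l\<^sub>2 (interior K)
    \<or> - (n\<^sub>2 *\<^sub>R u\<^sub>2) \<in> homothet (- (n\<^sub>1 *\<^sub>R u\<^sub>1)) l\<^sub>1 (interior K)"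
proof (cases "n\<^sub>1 \<le> n\<^sub>2")
  case True
  have "u\<^sub>2 - u\<^sub>1 = \<mu> *\<^sub>R (- y)"
    using assms(14) by (metis minus_diff_eq scaleR_minus_right)
  then show ?thesis
    using homothet_interior_mem_if_close_directions_le[OF assms(1,2,4,13,5,6) True assms(9-11)]
    by blast
next
  case False
  then show ?thesis
    using homothet_interior_mem_if_close_directions_le[OF assms(1,2,3,12,5,7) _ assms(8,10,11,14)]
    by simp
qed

theorem lemma21:
  fixes K :: "'a::euclidean_space set"
    and v1 v2 :: 'a and l1 l2 \<epsilon> :: real
  assumes "convex_body K" and "0 \<in> interior K"
    and "\<epsilon> \<ge> 0" and "l1 \<ge> 1" and "l2 \<ge> 1"
    and "v1 \<notin> homothet v2 l2 (interior K)"
    and "v2 \<notin> homothet v1 l1 (interior K)"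
    and "0 \<notin> homothet v1 l1 (interior K)"
    and "0 \<notin> homothet v2 l2 (interior K)"
    and "homothet v1 l1 K \<inter> (\<lambda>x. (- \<epsilon>) *\<^sub>R x) ` K \<noteq> {}"
    and "homothet v2 l2 K \<inter> (\<lambda>x. (- \<epsilon>) *\<^sub>R x) ` K \<noteq> {}"
  shows "gauge_norm (K \<inter> uminus ` K)
           ((1 / gauge_norm K (- v1)) *\<^sub>R (- v1) - (1 / gauge_norm K (- v2)) *\<^sub>R (- v2))
         \<ge> 1 - \<epsilon>"
proof -
  have closed: "closed K" and convex: "convex K"
    using assms(1) by (auto simp: convex_body_def compact_imp_closed)
  define n\<^sub>1 n\<^sub>2 where "n\<^sub>1 = gauge_norm K (- v1)" and "n\<^sub>2 = gauge_norm K (- v2)"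
  define u\<^sub>1 u\<^sub>2 where "u\<^sub>1 = (1 / n\<^sub>1) *\<^sub>R (- v1)" and "u\<^sub>2 = (1 / n\<^sub>2) *\<^sub>R (- v2)"
  have "0 < l1" "0 < l2" using assms(4,5) by auto
  then have n\<^sub>1: "l1 \<le> n\<^sub>1" "n\<^sub>1 \<le> l1 + \<epsilon>" and n\<^sub>2: "l2 \<le> n\<^sub>2" "n\<^sub>2 \<le> l2 + \<epsilon>"
    unfolding n\<^sub>1_def n\<^sub>2_def
    by (simp_all add: le_gauge_norm_if_origin_notin_homothet[OF convex assms(2)] assms(8,9)
        gauge_norm_le_if_homothet_meets[OF convex _ assms(3,10)]
        gauge_norm_le_if_homothet_meets[OF convex _ assms(3,11)])
  have u: "u\<^sub>1 \<in> K" "u\<^sub>2 \<in> K"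
    unfolding u\<^sub>1_def u\<^sub>2_def n\<^sub>1_def n\<^sub>2_def
    using n\<^sub>1 n\<^sub>2 assms(4,5) n\<^sub>1_def n\<^sub>2_def
    by (intro inverse_gauge_norm_scaleR_mem[OF closed convex assms(2)]; linarith)+
  have v: "v1 = - (n\<^sub>1 *\<^sub>R u\<^sub>1)" "v2 = - (n\<^sub>2 *\<^sub>R u\<^sub>2)"
    using n\<^sub>1 n\<^sub>2 assms(4,5) by (auto simp: u\<^sub>1_def u\<^sub>2_def)
  have "0 \<in> interior (K \<inter> uminus ` K)"
    using assms(2) by (simp add: interior_negations)
  show ?thesis
  proof (rule ccontr)
    assume "\<not> ?thesis"
    then have "gauge_norm (K \<inter> uminus ` K) (u\<^sub>1 - u\<^sub>2) < 1 - \<epsilon>"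
      by (simp add: u\<^sub>1_def u\<^sub>2_def n\<^sub>1_def n\<^sub>2_def)
    then obtain \<mu> y where "0 < \<mu>" "\<mu> < 1 - \<epsilon>" "y \<in> K \<inter> uminus ` K" "u\<^sub>1 - u\<^sub>2 = \<mu> *\<^sub>R y"
      by (rule gauge_norm_lessE[OF \<open>0 \<in> interior (K \<inter> uminus ` K)\<close>])
    then have "v1 \<in> homothet v2 l2 (interior K) \<or> v2 \<in> homothet v1 l1 (interior K)"
      unfolding v using n\<^sub>1 n\<^sub>2 assms(3-5)
      by (intro homothet_interior_mem_if_close_directions[OF convex assms(2) u]) auto
    then show False using assms(6,7) by blast
  qed
qed

end
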